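(* Let $L\ge 2$, $d\ge1$, let $x_0,\dots,x_{L-1}\in\mathbb{R}^d$ be pairwise distinct templates of equal Euclidean norm, and let $n_0,\dots,n_{M-1}$ be i.i.d. $\mathcal{N}(0,I_{d\times d})$. For $\beta\in\mathbb{R}\setminus\{0\}$ define $p_{i,\beta}^{(\ell)}=\frac{\exp(\beta\, n_i^T x_\ell)}{\sum_{r=0}^{L-1}\exp(\beta\, n_i^Tx_r)}$ and $\hat{x}_\ell^{(\beta)}=\frac{\sum_{i=0}^{M-1}p_{i,\beta}^{(\ell)}n_i}{\sum_{i=0}^{M-1}p_{i,\beta}^{(\ell)}}$. 1. For every $0\le\ell\le L-1$ (with $\mathcal{A}_\ell$ nonempty), almost surely $\lim_{\beta\to\infty}\hat{x}_\ell^{(\beta)}=\frac{1}{|\mathcal{A}_\ell|}\sum_{n_i\in\mathcal{A}_\ell}n_i$, where $\mathcal{A}_\ell=\{n_i: \arg\max_{0\le r\le L-1}\langle n_i,x_r\rangle=\ell\}$; i.e., the $\beta$-soft-assignment estimator coincides in the limit $\beta\to\infty$ with the hard-assignment estimator. 2. For every $0\le\ell\le L-1$, almost surely $\lim_{\beta\to 0}\lim_{M\to\infty}\frac{\hat{x}_\ell^{(\beta)}}{\beta}=x_\ell-\frac{1}{L}\sum_{r=0}^{L-1}x_r$.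
   Context: The argmax defining $\mathcal{A}_\ell$ is almost surely unique. The estimator $\frac{1}{|\mathcal{A}_\ell|}\sum_{n_i\in\mathcal{A}_\ell}n_i$ is the output of the hard-assignment algorithm (one iteration of $K$-means with initial centroids $x_0,\dots,x_{L-1}$). *)

theory Defs
  imports "HOL-Probability.Probability"
begin

definition softp :: "nat \<Rightarrow> (nat \<Rightarrow> 'v::real_inner) \<Rightarrow> 'v \<Rightarrow> real \<Rightarrow> nat \<Rightarrow> real" where
  "softp L x v \<beta> l = exp (\<beta> * (v \<bullet> x l)) / (\<Sum>r<L. exp (\<beta> * (v \<bullet> x r)))"

definition xhat :: "nat \<Rightarrow> (nat \<Rightarrow> 'v::real_inner) \<Rightarrow> (nat \<Rightarrow> 'v) \<Rightarrow> nat \<Rightarrow> real \<Rightarrow> nat \<Rightarrow> 'v" where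
  "xhat L x ns m \<beta> l =
     inverse (\<Sum>i<m. softp L x (ns i) \<beta> l) *\<^sub>R (\<Sum>i<m. softp L x (ns i) \<beta> l *\<^sub>R ns i)"

text \<open>Index set of A_l: samples whose (unique) argmax over r of <n_i, x_r> is l.\<close>
definition hard_set :: "nat \<Rightarrow> (nat \<Rightarrow> 'v::real_inner) \<Rightarrow> (nat \<Rightarrow> 'v) \<Rightarrow> nat \<Rightarrow> nat \<Rightarrow> nat set" where
  "hard_set L x ns m l = {i. i < m \<and> (\<forall>r<L. r \<noteq> l \<longrightarrow> ns i \<bullet> x r < ns i \<bullet> x l)}"

definition hard_est :: "nat \<Rightarrow> (nat \<Rightarrow> 'v::real_inner) \<Rightarrow> (nat \<Rightarrow> 'v) \<Rightarrow> nat \<Rightarrow> nat \<Rightarrow> 'v" where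
  "hard_est L x ns m l =
     (1 / real (card (hard_set L x ns m l))) *\<^sub>R (\<Sum>i\<in>hard_set L x ns m l. ns i)"

end

theory Submission
  imports Defs "HOL-Library.Discrete_Functions"
begin

(* As beta tends to infinity, every softmax weight p_{i,beta}^(l) tends to the indicator of the event
   that l is the maximiser of <n_i, x_r>; the maximiser is almost surely unique because
   <n_i, x_r - x_l> is a nondegenerate Gaussian, so the soft estimator tends to the hard one.

   For fixed beta, numerator and denominator of the estimator are sample means of i.i.d.
   square-integrable variables, hence converge almost surely to E[p_beta n] and E[p_beta] by a
   strong law of large numbers (Chebyshev along the squares k^2, Borel-Cantelli, and monotone
   interpolation, applied to positive and negative parts).  Since these sample means are
   Lipschitz in beta with a constant that itself converges, one null set serves all beta at once.
   Finally E[p_beta] -> 1/L, and differentiating the softmax at beta = 0 together with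
   dominated convergence and E[(n . y) n] = y gives E[p_beta n] / beta -> (x_l - mean_r x_r) / L. *)

section \<open>Softmax weights\<close>

lemma softp_pos: "l < L \<Longrightarrow> 0 < softp L x v \<beta> l"
  unfolding softp_def by (intro divide_pos_pos sum_pos) auto

lemma softp_le_1: "l < L \<Longrightarrow> softp L x v \<beta> l \<le> 1"
  unfolding softp_def by (subst divide_le_eq_1_pos) (auto intro!: sum_pos member_le_sum)

lemma abs_softp_le_1: "l < L \<Longrightarrow> \<bar>softp L x v \<beta> l\<bar> \<le> 1"
  by (simp add: abs_of_pos softp_pos softp_le_1)

lemma softp_at_0: "softp L x v 0 l = 1 / real L"
  unfolding softp_def by simp

lemma softp_has_real_derivative:
  assumes "l < L"
  shows "((\<lambda>b. softp L x v b l) has_real_derivative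
           softp L x v t l * (v \<bullet> x l - (\<Sum>r<L. softp L x v t r * (v \<bullet> x r)))) (at t)"
proof -
  define a where "a r = v \<bullet> x r" for r
  define S where "S b = (\<Sum>r<L. exp (b * a r))" for b
  have S_pos: "0 < S t" unfolding S_def using assms by (intro sum_pos) auto
  have softp_eq: "softp L x v b r = exp (b * a r) / S b" for b r
    unfolding softp_def S_def a_def ..
  have "((\<lambda>b. exp (b * a l) / S b) has_real_derivative
      (exp (t * a l) * a l * S t - exp (t * a l) * (\<Sum>r<L. exp (t * a r) * a r)) / (S t)\<^sup>2) (at t)"
    using S_pos unfolding S_def by (auto intro!: derivative_eq_intros simp: power2_eq_square)
  moreover have "(exp (t * a l) * a l * S t - exp (t * a l) * (\<Sum>r<L. exp (t * a r) * a r)) / (S t)\<^sup>2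
      = exp (t * a l) / S t * (a l - (\<Sum>r<L. exp (t * a r) / S t * a r))"
    using S_pos
    by (simp add: field_simps power2_eq_square sum_divide_distrib[symmetric] sum_distrib_left)
  ultimately show ?thesis
    unfolding softp_eq a_def by simp
qed

lemma softp_lipschitz:
  assumes "l < L"
  shows "\<bar>softp L x v a l - softp L x v b l\<bar> \<le> 2 * (\<Sum>r<L. norm (x r)) * norm v * \<bar>a - b\<bar>"
proof -
  have deriv_bound: "\<bar>softp L x v t l * (v \<bullet> x l - (\<Sum>r<L. softp L x v t r * (v \<bullet> x r)))\<bar>
      \<le> 2 * (\<Sum>r<L. norm (x r)) * norm v" for t
  proof -
    define B where "B = (\<Sum>r<L. \<bar>v \<bullet> x r\<bar>)"
    have "\<bar>\<Sum>r<L. softp L x v t r * (v \<bullet> x r)\<bar> \<le> B"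
      unfolding B_def
      by (rule order_trans[OF sum_abs], rule sum_mono) (simp add: abs_mult mult_left_le_one_le abs_softp_le_1)
    moreover have "\<bar>v \<bullet> x l\<bar> \<le> B"
      unfolding B_def using assms by (intro member_le_sum) auto
    ultimately have "\<bar>v \<bullet> x l - (\<Sum>r<L. softp L x v t r * (v \<bullet> x r))\<bar> \<le> 2 * B"
      by linarith
    moreover have "B \<le> (\<Sum>r<L. norm (x r)) * norm v"
      unfolding B_def sum_distrib_right by (intro sum_mono) (simp add: Cauchy_Schwarz_ineq2 mult.commute)
    moreover have "\<bar>softp L x v t l\<bar> * \<bar>v \<bullet> x l - (\<Sum>r<L. softp L x v t r * (v \<bullet> x r))\<bar>
        \<le> \<bar>v \<bullet> x l - (\<Sum>r<L. softp L x v t r * (v \<bullet> x r))\<bar>"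
      by (simp add: mult_left_le_one_le abs_softp_le_1[OF assms])
    ultimately show ?thesis
      unfolding abs_mult by linarith
  qed
  have "norm (softp L x v a l - softp L x v b l) \<le> 2 * (\<Sum>r<L. norm (x r)) * norm v * norm (a - b)"
    by (rule field_differentiable_bound[OF convex_UNIV])
       (use softp_has_real_derivative[OF assms] deriv_bound in auto)
  then show ?thesis
    by simp
qed

lemma softp_slope_at_0:
  assumes "l < L"
  shows "((\<lambda>b. (softp L x v b l - 1 / real L) / b) \<longlongrightarrow>
           (v \<bullet> x l - (\<Sum>r<L. v \<bullet> x r) / real L) / real L) (at 0)"
proof -
  have slope_at_0: "softp L x v 0 l * (v \<bullet> x l - (\<Sum>r<L. softp L x v 0 r * (v \<bullet> x r)))
      = (v \<bullet> x l - (\<Sum>r<L. v \<bullet> x r) / real L) / real L"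
    by (simp add: softp_at_0 sum_divide_distrib[symmetric])
  have "((\<lambda>b. (softp L x v b l - softp L x v 0 l) / (b - 0)) \<longlongrightarrow>
      softp L x v 0 l * (v \<bullet> x l - (\<Sum>r<L. softp L x v 0 r * (v \<bullet> x r)))) (at 0)"
    using softp_has_real_derivative[OF assms] unfolding has_field_derivative_iff .
  from this[unfolded slope_at_0] show ?thesis
    unfolding softp_at_0 diff_zero .
qed

lemma le_one_plus_sq: "(t :: real) \<le> 1 + t\<^sup>2"
proof -
  have "0 \<le> (t - 1 / 2)\<^sup>2"
    by simp
  then show ?thesis
    by (simp add: power2_eq_square algebra_simps)
qed

lemma softp_lipschitz_weighted:
  assumes "l < L"
  shows "\<bar>softp L x v a l - softp L x v b l\<bar> \<le> 2 * (\<Sum>r<L. norm (x r)) * (1 + (norm v)\<^sup>2) * \<bar>a - b\<bar>"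
proof -
  have "\<bar>softp L x v a l - softp L x v b l\<bar> \<le> (2 * (\<Sum>r<L. norm (x r)) * \<bar>a - b\<bar>) * norm v"
    using softp_lipschitz[OF assms, of x v a b] by (simp add: mult_ac)
  also have "\<dots> \<le> (2 * (\<Sum>r<L. norm (x r)) * \<bar>a - b\<bar>) * (1 + (norm v)\<^sup>2)"
    by (intro mult_left_mono le_one_plus_sq) (simp add: sum_nonneg)
  finally show ?thesis
    by (simp add: mult_ac)
qed

lemma softp_mult_coord_lipschitz_weighted:
  fixes v :: "real ^ 'd"
  assumes "l < L"
  shows "\<bar>softp L x v a l * v $ k - softp L x v b l * v $ k\<bar>
           \<le> 2 * (\<Sum>r<L. norm (x r)) * (1 + (norm v)\<^sup>2) * \<bar>a - b\<bar>"
proof -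
  have "\<bar>softp L x v a l * v $ k - softp L x v b l * v $ k\<bar>
      = \<bar>softp L x v a l - softp L x v b l\<bar> * \<bar>v $ k\<bar>"
    by (simp add: left_diff_distrib[symmetric] abs_mult)
  also have "\<dots> \<le> (2 * (\<Sum>r<L. norm (x r)) * norm v * \<bar>a - b\<bar>) * \<bar>v $ k\<bar>"
    by (intro mult_right_mono softp_lipschitz assms) simp
  also have "\<dots> = (2 * (\<Sum>r<L. norm (x r)) * \<bar>a - b\<bar>) * (norm v * \<bar>v $ k\<bar>)"
    by (simp add: mult_ac)
  also have "\<dots> \<le> (2 * (\<Sum>r<L. norm (x r)) * \<bar>a - b\<bar>) * (1 + (norm v)\<^sup>2)"
  proof (intro mult_left_mono)
    have "norm v * \<bar>v $ k\<bar> \<le> (norm v)\<^sup>2"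
      using mult_left_mono[OF component_le_norm_cart[of v k] norm_ge_zero[of v]]
      by (simp add: power2_eq_square)
    then show "norm v * \<bar>v $ k\<bar> \<le> 1 + (norm v)\<^sup>2"
      by simp
  qed (simp add: sum_nonneg)
  finally show ?thesis
    by (simp add: mult_ac)
qed

lemma abs_softp_slope_mult_coord_le:
  fixes v :: "real ^ 'd"
  assumes "l < L" and "\<beta> \<noteq> 0"
  shows "\<bar>(softp L x v \<beta> l - 1 / real L) / \<beta> * v $ k\<bar> \<le> 2 * (\<Sum>r<L. norm (x r)) * (1 + (norm v)\<^sup>2)"
proof -
  have "\<bar>(softp L x v \<beta> l - 1 / real L) / \<beta> * v $ k\<bar>
      = \<bar>softp L x v \<beta> l * v $ k - softp L x v 0 l * v $ k\<bar> / \<bar>\<beta>\<bar>"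
    by (simp add: softp_at_0 abs_mult left_diff_distrib)
  also have "\<dots> \<le> 2 * (\<Sum>r<L. norm (x r)) * (1 + (norm v)\<^sup>2)"
    using assms(2) softp_mult_coord_lipschitz_weighted[OF assms(1), where x=x and v=v and k=k and a=\<beta> and b=0]
    by (simp add: pos_divide_le_eq)
  finally show ?thesis .
qed

lemma borel_measurable_softp [measurable]:
  fixes x :: "nat \<Rightarrow> 'v :: euclidean_space"
  shows "(\<lambda>v. softp L x v \<beta> l) \<in> borel_measurable borel"
  unfolding softp_def by measurable

lemma exp_mult_neg_tendsto_0:
  fixes c :: real
  assumes "c < 0"
  shows "((\<lambda>b. exp (b * c)) \<longlongrightarrow> 0) at_top"
proof -
  have "filterlim (\<lambda>b. c * b) at_bot at_top"
    by (rule filterlim_tendsto_neg_mult_at_bot[OF tendsto_const assms filterlim_ident])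
  then show ?thesis
    by (simp add: mult.commute filterlim_compose[OF exp_at_bot])
qed

lemma softp_tendsto_1_at_top:
  assumes "l < L" and "\<And>r. r < L \<Longrightarrow> r \<noteq> l \<Longrightarrow> v \<bullet> x r < v \<bullet> x l"
  shows "((\<lambda>b. softp L x v b l) \<longlongrightarrow> 1) at_top"
proof -
  have softp_eq: "softp L x v b l = inverse (\<Sum>r<L. exp (b * (v \<bullet> x r - v \<bullet> x l)))" for b
    by (simp add: softp_def right_diff_distrib exp_diff sum_divide_distrib[symmetric])
  have "((\<lambda>b. exp (b * (v \<bullet> x r - v \<bullet> x l))) \<longlongrightarrow> (if r = l then 1 else 0)) at_top" if "r < L" for r
    using exp_mult_neg_tendsto_0[of "v \<bullet> x r - v \<bullet> x l"] assms(2)[OF that] by auto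
  then have "((\<lambda>b. \<Sum>r<L. exp (b * (v \<bullet> x r - v \<bullet> x l))) \<longlongrightarrow> (\<Sum>r<L. if r = l then 1 else 0)) at_top"
    by (intro tendsto_sum) auto
  then show ?thesis
    using assms(1) unfolding softp_eq by (auto intro: tendsto_eq_intros)
qed

lemma softp_tendsto_0_at_top:
  assumes "l < L" "r < L" "v \<bullet> x l < v \<bullet> x r"
  shows "((\<lambda>b. softp L x v b l) \<longlongrightarrow> 0) at_top"
proof (rule tendsto_sandwich[OF _ _ tendsto_const exp_mult_neg_tendsto_0])
  show "\<forall>\<^sub>F b in at_top. 0 \<le> softp L x v b l"
    by (intro always_eventually allI less_imp_le softp_pos assms(1))
  show "\<forall>\<^sub>F b in at_top. softp L x v b l \<le> exp (b * (v \<bullet> x l - v \<bullet> x r))"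
  proof (intro always_eventually allI)
    fix b
    have "exp (b * (v \<bullet> x l)) / (\<Sum>r<L. exp (b * (v \<bullet> x r))) \<le> exp (b * (v \<bullet> x l)) / exp (b * (v \<bullet> x r))"
      using assms(2) by (intro divide_left_mono member_le_sum mult_pos_pos sum_pos) auto
    then show "softp L x v b l \<le> exp (b * (v \<bullet> x l - v \<bullet> x r))"
      unfolding softp_def by (simp add: right_diff_distrib exp_diff)
  qed
qed (use assms(3) in simp)

lemma hard_set_eq:
  "hard_set L x ns m l = {i \<in> {..<m}. \<forall>r<L. r \<noteq> l \<longrightarrow> ns i \<bullet> x r < ns i \<bullet> x l}"
  by (auto simp: hard_set_def)

lemma xhat_tendsto_hard_est:
  assumes "l < L"
    and no_tie: "\<And>i r. i < m \<Longrightarrow> r < L \<Longrightarrow> r \<noteq> l \<Longrightarrow> ns i \<bullet> x r \<noteq> ns i \<bullet> x l"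
    and "hard_set L x ns m l \<noteq> {}"
  shows "((\<lambda>\<beta>. xhat L x ns m \<beta> l) \<longlongrightarrow> hard_est L x ns m l) at_top"
proof -
  define P where "P i \<longleftrightarrow> (\<forall>r<L. r \<noteq> l \<longrightarrow> ns i \<bullet> x r < ns i \<bullet> x l)" for i
  have H: "hard_set L x ns m l = {i \<in> {..<m}. P i}"
    unfolding hard_set_eq P_def ..
  have lim: "((\<lambda>\<beta>. softp L x (ns i) \<beta> l) \<longlongrightarrow> (if P i then 1 else 0)) at_top" if i: "i < m" for i
  proof (cases "P i")
    case True
    then show ?thesis by (auto simp: P_def intro!: softp_tendsto_1_at_top[OF assms(1)])
  next
    case False
    then obtain r where "r < L" "ns i \<bullet> x l < ns i \<bullet> x r"
      using no_tie[OF i] unfolding P_def by (meson linorder_neqE_linordered_idom)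
    then show ?thesis using softp_tendsto_0_at_top[OF assms(1)] False by simp
  qed
  have weights: "((\<lambda>\<beta>. \<Sum>i<m. softp L x (ns i) \<beta> l) \<longlongrightarrow> (\<Sum>i<m. if P i then 1 else 0)) at_top"
    using lim by (intro tendsto_sum) auto
  have weighted: "((\<lambda>\<beta>. \<Sum>i<m. softp L x (ns i) \<beta> l *\<^sub>R ns i)
      \<longlongrightarrow> (\<Sum>i<m. (if P i then 1 else 0) *\<^sub>R ns i)) at_top"
    using lim by (intro tendsto_sum tendsto_scaleR) auto
  have card_eq: "(\<Sum>i<m. if P i then 1 else 0) = real (card (hard_set L x ns m l))"
    unfolding H by (simp add: sum.inter_filter[symmetric])
  have sum_eq: "(\<Sum>i<m. (if P i then 1 else 0) *\<^sub>R ns i) = (\<Sum>i\<in>hard_set L x ns m l. ns i)"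
  proof -
    have "(\<Sum>i<m. (if P i then 1 else 0) *\<^sub>R ns i) = (\<Sum>i<m. if P i then ns i else 0)"
      by (rule sum.cong) auto
    then show ?thesis
      unfolding H using sum.inter_filter[of "{..<m}" ns P] by simp
  qed
  have "card (hard_set L x ns m l) \<noteq> 0"
    using assms(3) by (simp add: hard_set_eq)
  then have "((\<lambda>\<beta>. inverse (\<Sum>i<m. softp L x (ns i) \<beta> l) *\<^sub>R (\<Sum>i<m. softp L x (ns i) \<beta> l *\<^sub>R ns i))
      \<longlongrightarrow> inverse (real (card (hard_set L x ns m l))) *\<^sub>R (\<Sum>i\<in>hard_set L x ns m l. ns i)) at_top"
    using weights weighted unfolding card_eq sum_eq by (intro tendsto_scaleR tendsto_inverse) auto
  then show ?thesis
    unfolding xhat_def hard_est_def by (simp add: divide_inverse)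
qed

lemma xhat_eq_ratio_of_averages:
  fixes ns :: "nat \<Rightarrow> real ^ 'd"
  assumes "0 < m"
  shows "xhat L x ns m \<beta> l = inverse ((\<Sum>i<m. softp L x (ns i) \<beta> l) / real m)
           *\<^sub>R (\<chi> k. (\<Sum>i<m. softp L x (ns i) \<beta> l * ns i $ k) / real m)"
  using assms by (simp add: xhat_def vec_eq_iff divide_inverse mult_ac)

section \<open>A strong law of large numbers\<close>

lemma incseq_divide_between_floor_sqrt:
  fixes S :: "nat \<Rightarrow> real"
  assumes "incseq S" and nonneg: "\<And>m. 0 \<le> S m" and "1 \<le> m"
  defines "k \<equiv> floor_sqrt m"
  shows "S (k\<^sup>2) / real ((Suc k)\<^sup>2) \<le> S m / real m"
    and "S m / real m \<le> S ((Suc k)\<^sup>2) / real (k\<^sup>2)"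
proof -
  have k: "k\<^sup>2 \<le> m" "m < (Suc k)\<^sup>2" "1 \<le> k"
    using \<open>1 \<le> m\<close> Suc_floor_sqrt_power2_gt[of m] by (auto simp: k_def Suc_le_eq)
  have "S (k\<^sup>2) / real ((Suc k)\<^sup>2) \<le> S m / real ((Suc k)\<^sup>2)"
    using incseqD[OF assms(1) k(1)] by (intro divide_right_mono) auto
  also have "\<dots> \<le> S m / real m"
    using k(2) \<open>1 \<le> m\<close> nonneg[of m] by (intro divide_left_mono) (auto simp only: of_nat_le_iff, auto)
  finally show "S (k\<^sup>2) / real ((Suc k)\<^sup>2) \<le> S m / real m" .
  have "S m / real m \<le> S ((Suc k)\<^sup>2) / real m"
    using incseqD[OF assms(1), of m "(Suc k)\<^sup>2"] k(2) \<open>1 \<le> m\<close> by (intro divide_right_mono) auto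
  also have "\<dots> \<le> S ((Suc k)\<^sup>2) / real (k\<^sup>2)"
    using k \<open>1 \<le> m\<close> nonneg[of "(Suc k)\<^sup>2"] by (intro divide_left_mono) auto
  finally show "S m / real m \<le> S ((Suc k)\<^sup>2) / real (k\<^sup>2)" .
qed

lemma LIMSEQ_divide_of_incseq_squares:
  fixes S :: "nat \<Rightarrow> real"
  assumes "incseq S" and "\<And>m. 0 \<le> S m"
    and squares: "(\<lambda>k. S (k\<^sup>2) / real (k\<^sup>2)) \<longlonglongrightarrow> \<mu>"
  shows "(\<lambda>m. S m / real m) \<longlonglongrightarrow> \<mu>"
proof -
  have floor_sqrt_at_top: "filterlim floor_sqrt at_top sequentially"
    unfolding filterlim_at_top
  proof
    fix Z :: nat
    show "\<forall>\<^sub>F m in sequentially. Z \<le> floor_sqrt m"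
      using eventually_ge_at_top[of "Z\<^sup>2"] by eventually_elim (rule le_floor_sqrtI)
  qed
  have "(\<lambda>k. S (k\<^sup>2) / real (k\<^sup>2) * (real k / real (Suc k))\<^sup>2) \<longlonglongrightarrow> \<mu> * 1\<^sup>2"
    using squares by (intro tendsto_intros LIMSEQ_n_over_Suc_n)
  moreover have "\<forall>\<^sub>F k in sequentially.
      S (k\<^sup>2) / real (k\<^sup>2) * (real k / real (Suc k))\<^sup>2 = S (k\<^sup>2) / real ((Suc k)\<^sup>2)"
    using eventually_ge_at_top[of 1] by eventually_elim (simp add: power_divide)
  ultimately have "(\<lambda>k. S (k\<^sup>2) / real ((Suc k)\<^sup>2)) \<longlonglongrightarrow> \<mu>"
    by (simp add: Lim_transform_eventually)
  from filterlim_compose[OF this floor_sqrt_at_top]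
  have lower: "(\<lambda>m. S ((floor_sqrt m)\<^sup>2) / real ((Suc (floor_sqrt m))\<^sup>2)) \<longlonglongrightarrow> \<mu>" .
  have "(\<lambda>k. S ((Suc k)\<^sup>2) / real ((Suc k)\<^sup>2) * (real (Suc k) / real k)\<^sup>2) \<longlonglongrightarrow> \<mu> * 1\<^sup>2"
    using LIMSEQ_Suc[OF squares] by (intro tendsto_intros LIMSEQ_Suc_n_over_n)
  moreover have "\<forall>\<^sub>F k in sequentially. S ((Suc k)\<^sup>2) / real ((Suc k)\<^sup>2) * (real (Suc k) / real k)\<^sup>2
      = S ((Suc k)\<^sup>2) / real (k\<^sup>2)"
    using eventually_ge_at_top[of 1] by eventually_elim (simp add: power_divide)
  ultimately have "(\<lambda>k. S ((Suc k)\<^sup>2) / real (k\<^sup>2)) \<longlonglongrightarrow> \<mu>"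
    by (simp add: Lim_transform_eventually)
  from filterlim_compose[OF this floor_sqrt_at_top]
  have upper: "(\<lambda>m. S ((Suc (floor_sqrt m))\<^sup>2) / real ((floor_sqrt m)\<^sup>2)) \<longlonglongrightarrow> \<mu>" .
  show ?thesis
  proof (rule tendsto_sandwich[OF _ _ lower upper])
    show "\<forall>\<^sub>F m in sequentially. S ((floor_sqrt m)\<^sup>2) / real ((Suc (floor_sqrt m))\<^sup>2) \<le> S m / real m"
      using eventually_ge_at_top[of 1]
      by eventually_elim (rule incseq_divide_between_floor_sqrt(1)[OF assms(1,2)])
    show "\<forall>\<^sub>F m in sequentially. S m / real m \<le> S ((Suc (floor_sqrt m))\<^sup>2) / real ((floor_sqrt m)\<^sup>2)"
      using eventually_ge_at_top[of 1]
      by eventually_elim (rule incseq_divide_between_floor_sqrt(2)[OF assms(1,2)])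
  qed
qed

lemma (in prob_space) AE_LIMSEQ_if_summable_prob_deviation:
  fixes T :: "nat \<Rightarrow> 'a \<Rightarrow> real"
  assumes [measurable]: "\<And>k. T k \<in> borel_measurable M"
    and summable: "\<And>e. 0 < e \<Longrightarrow> summable (\<lambda>k. prob {x \<in> space M. e \<le> \<bar>T k x - \<mu>\<bar>})"
  shows "AE x in M. (\<lambda>k. T k x) \<longlonglongrightarrow> \<mu>"
proof -
  have "AE x in M. \<forall>\<^sub>F k in sequentially. \<bar>T k x - \<mu>\<bar> < e" if "0 < e" for e
  proof -
    have "AE x in M. \<forall>\<^sub>F k in sequentially. x \<in> space M - {x \<in> space M. e \<le> \<bar>T k x - \<mu>\<bar>}"
      using summable[OF that] by (intro borel_cantelli_AE1) (auto simp: emeasure_eq_measure)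
    then show ?thesis
      by (rule AE_mp) (auto elim!: eventually_mono)
  qed
  then have "AE x in M. \<forall>j::nat. \<forall>\<^sub>F k in sequentially. \<bar>T k x - \<mu>\<bar> < inverse (Suc j)"
    unfolding AE_all_countable by simp
  then show ?thesis
  proof eventually_elim
    case (elim x)
    show ?case
    proof (rule tendstoI)
      fix e :: real
      assume "0 < e"
      then obtain j where "inverse (real (Suc j)) < e"
        using reals_Archimedean by blast
      with elim[rule_format, of j] show "\<forall>\<^sub>F k in sequentially. dist (T k x) \<mu> < e"
        by (auto simp: dist_real_def elim: eventually_mono)
    qed
  qed
qed

lemma (in prob_space)
  fixes Y :: "nat \<Rightarrow> 'a \<Rightarrow> real"
  assumes "finite I"
    and integrable_prod: "\<And>i j. integrable M (\<lambda>x. Y i x * Y j x)"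
    and integrable: "\<And>i. integrable M (Y i)"
    and mean: "\<And>i. expectation (Y i) = \<mu>"
    and uncorrelated: "\<And>i j. i \<noteq> j \<Longrightarrow> expectation (\<lambda>x. Y i x * Y j x) = \<mu>\<^sup>2"
  shows integrable_sum_centred_sq: "integrable M (\<lambda>x. (\<Sum>i\<in>I. Y i x - \<mu>)\<^sup>2)"
    and expectation_sum_centred_sq:
      "expectation (\<lambda>x. (\<Sum>i\<in>I. Y i x - \<mu>)\<^sup>2) = (\<Sum>i\<in>I. expectation (\<lambda>x. (Y i x)\<^sup>2) - \<mu>\<^sup>2)"
proof -
  define Z where "Z i j x = (Y i x - \<mu>) * (Y j x - \<mu>)" for i j x
  have expand: "(\<lambda>x. (\<Sum>i\<in>I. Y i x - \<mu>)\<^sup>2) = (\<lambda>x. \<Sum>i\<in>I. \<Sum>j\<in>I. Z i j x)"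
    by (simp add: Z_def power2_eq_square sum_product)
  have Z_eq: "Z i j = (\<lambda>x. Y i x * Y j x - \<mu> * Y j x - \<mu> * Y i x + \<mu>\<^sup>2)" for i j
    by (auto simp: Z_def fun_eq_iff algebra_simps power2_eq_square)
  have integrable_Z: "integrable M (Z i j)" for i j
    unfolding Z_eq using integrable_prod integrable by simp
  have expectation_Z: "expectation (Z i j) = expectation (\<lambda>x. Y i x * Y j x) - \<mu>\<^sup>2" for i j
    unfolding Z_eq using integrable_prod integrable mean by (simp add: prob_space power2_eq_square)
  show "integrable M (\<lambda>x. (\<Sum>i\<in>I. Y i x - \<mu>)\<^sup>2)"
    unfolding expand using integrable_Z by simp
  have "expectation (\<lambda>x. (\<Sum>i\<in>I. Y i x - \<mu>)\<^sup>2) = (\<Sum>i\<in>I. \<Sum>j\<in>I. expectation (Z i j))"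
    unfolding expand using integrable_Z by (simp add: Bochner_Integration.integral_sum)
  also have "\<dots> = (\<Sum>i\<in>I. expectation (Z i i))"
  proof (rule sum.cong)
    fix i
    assume "i \<in> I"
    then show "(\<Sum>j\<in>I. expectation (Z i j)) = expectation (Z i i)"
      using \<open>finite I\<close>
      by (subst sum.remove[of _ i]) (auto simp: expectation_Z uncorrelated intro!: sum.neutral)
  qed simp
  finally show "expectation (\<lambda>x. (\<Sum>i\<in>I. Y i x - \<mu>)\<^sup>2) = (\<Sum>i\<in>I. expectation (\<lambda>x. (Y i x)\<^sup>2) - \<mu>\<^sup>2)"
    by (simp add: expectation_Z power2_eq_square)
qed

lemma (in prob_space) prob_average_deviation_le:
  fixes Y :: "nat \<Rightarrow> 'a \<Rightarrow> real"
  assumes [measurable]: "\<And>i. Y i \<in> borel_measurable M"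
    and integrable_prod: "\<And>i j. integrable M (\<lambda>x. Y i x * Y j x)"
    and integrable: "\<And>i. integrable M (Y i)"
    and mean: "\<And>i. expectation (Y i) = \<mu>"
    and second_moment: "\<And>i. expectation (\<lambda>x. (Y i x)\<^sup>2) \<le> C"
    and uncorrelated: "\<And>i j. i \<noteq> j \<Longrightarrow> expectation (\<lambda>x. Y i x * Y j x) = \<mu>\<^sup>2"
    and "0 < m" "0 < e"
  shows "prob {x \<in> space M. e \<le> \<bar>(\<Sum>i<m. Y i x) / real m - \<mu>\<bar>} \<le> C / (real m * e\<^sup>2)"
proof -
  have "(\<Sum>i<m. Y i x) / real m - \<mu> = (\<Sum>i<m. Y i x - \<mu>) / real m" for x
    using \<open>0 < m\<close> by (simp add: sum_subtractf diff_divide_distrib)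
  then have "{x \<in> space M. e \<le> \<bar>(\<Sum>i<m. Y i x) / real m - \<mu>\<bar>}
      = {x \<in> space M. \<bar>\<Sum>i<m. Y i x - \<mu>\<bar> \<ge> e * real m}"
    using \<open>0 < m\<close> by (simp add: pos_le_divide_eq)
  also have "prob \<dots> \<le> expectation (\<lambda>x. (\<Sum>i<m. Y i x - \<mu>)\<^sup>2) / (e * real m)\<^sup>2"
    using assms by (intro second_moment_method integrable_sum_centred_sq) simp_all
  also have "\<dots> \<le> real m * C / (e * real m)\<^sup>2"
  proof (intro divide_right_mono)
    have "expectation (\<lambda>x. (\<Sum>i<m. Y i x - \<mu>)\<^sup>2) = (\<Sum>i<m. expectation (\<lambda>x. (Y i x)\<^sup>2) - \<mu>\<^sup>2)"
      using assms by (intro expectation_sum_centred_sq) simp_all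
    also have "\<dots> \<le> (\<Sum>i<m. C)"
    proof (rule sum_mono)
      show "expectation (\<lambda>x. (Y i x)\<^sup>2) - \<mu>\<^sup>2 \<le> C" for i
        using second_moment[of i] zero_le_power2[of \<mu>] by linarith
    qed
    finally show "expectation (\<lambda>x. (\<Sum>i<m. Y i x - \<mu>)\<^sup>2) \<le> real m * C"
      by simp
  qed simp
  also have "\<dots> = C / (real m * e\<^sup>2)"
    using \<open>0 < m\<close> by (simp add: power2_eq_square)
  finally show ?thesis .
qed

lemma (in prob_space) strong_law_nonneg_uncorrelated:
  fixes Y :: "nat \<Rightarrow> 'a \<Rightarrow> real"
  assumes [measurable]: "\<And>i. Y i \<in> borel_measurable M"
    and nonneg: "\<And>i x. 0 \<le> Y i x"
    and integrable_prod: "\<And>i j. integrable M (\<lambda>x. Y i x * Y j x)"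
    and mean: "\<And>i. expectation (Y i) = \<mu>"
    and second_moment: "\<And>i. expectation (\<lambda>x. (Y i x)\<^sup>2) \<le> C"
    and uncorrelated: "\<And>i j. i \<noteq> j \<Longrightarrow> expectation (\<lambda>x. Y i x * Y j x) = \<mu>\<^sup>2"
  shows "AE x in M. (\<lambda>m. (\<Sum>i<m. Y i x) / real m) \<longlonglongrightarrow> \<mu>"
proof -
  have integrable: "integrable M (Y i)" for i
  proof (rule square_integrable_imp_integrable)
    show "integrable M (\<lambda>x. (Y i x)\<^sup>2)"
      using integrable_prod[of i i] by (simp add: power2_eq_square)
  qed simp
  have "AE x in M. (\<lambda>k. (\<Sum>i<k\<^sup>2. Y i x) / real (k\<^sup>2)) \<longlonglongrightarrow> \<mu>"
  proof (rule AE_LIMSEQ_if_summable_prob_deviation)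
    fix e :: real
    assume "0 < e"
    have "summable (\<lambda>k. C / e\<^sup>2 * inverse (real k ^ 2))"
      by (intro summable_mult inverse_power_summable) simp
    then show "summable (\<lambda>k. prob {x \<in> space M. e \<le> \<bar>(\<Sum>i<k\<^sup>2. Y i x) / real (k\<^sup>2) - \<mu>\<bar>})"
    proof (rule summable_comparison_test'[where N=1])
      fix k :: nat
      assume "1 \<le> k"
      then have "prob {x \<in> space M. e \<le> \<bar>(\<Sum>i<k\<^sup>2. Y i x) / real (k\<^sup>2) - \<mu>\<bar>} \<le> C / (real (k\<^sup>2) * e\<^sup>2)"
        using \<open>0 < e\<close> assms integrable by (intro prob_average_deviation_le) auto
      also have "\<dots> = C / e\<^sup>2 * inverse (real k ^ 2)"
        by (simp add: divide_inverse mult_ac)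
      finally show "norm (prob {x \<in> space M. e \<le> \<bar>(\<Sum>i<k\<^sup>2. Y i x) / real (k\<^sup>2) - \<mu>\<bar>})
          \<le> C / e\<^sup>2 * inverse (real k ^ 2)"
        by simp
    qed
  qed simp
  then show ?thesis
  proof eventually_elim
    case (elim x)
    have "incseq (\<lambda>m. \<Sum>i<m. Y i x)"
      by (rule incseq_SucI) (simp add: nonneg)
    then show ?case
      by (rule LIMSEQ_divide_of_incseq_squares[OF _ _ elim]) (simp add: sum_nonneg nonneg)
  qed
qed

lemma (in prob_space) strong_law_nonneg_pairwise_indep:
  fixes Y :: "nat \<Rightarrow> 'a \<Rightarrow> real"
  assumes [measurable]: "\<And>i. Y i \<in> borel_measurable M"
    and nonneg: "\<And>i x. 0 \<le> Y i x"
    and ident: "\<And>i. distr M borel (Y i) = distr M borel (Y 0)"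
    and indep: "\<And>i j. i \<noteq> j \<Longrightarrow> indep_var borel (Y i) borel (Y j)"
    and square_integrable: "integrable M (\<lambda>x. (Y 0 x)\<^sup>2)"
  shows "AE x in M. (\<lambda>m. (\<Sum>i<m. Y i x) / real m) \<longlonglongrightarrow> expectation (Y 0)"
proof -
  have integrable_ident: "integrable M (\<lambda>x. g (Y i x)) \<longleftrightarrow> integrable M (\<lambda>x. g (Y 0 x))"
    and expectation_ident: "expectation (\<lambda>x. g (Y i x)) = expectation (\<lambda>x. g (Y 0 x))"
    if [measurable]: "g \<in> borel_measurable borel" for g :: "real \<Rightarrow> real" and i
    using integrable_distr_eq[of "Y i" M borel g] integrable_distr_eq[of "Y 0" M borel g]
      integral_distr[of "Y i" M borel g] integral_distr[of "Y 0" M borel g]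
    by (simp_all add: ident[of i])
  have integrable_sq: "integrable M (\<lambda>x. Y i x * Y i x)" for i
    using square_integrable integrable_ident[of "\<lambda>y. y * y" i] by (simp add: power2_eq_square)
  have integrable: "integrable M (Y i)" for i
    using square_integrable_imp_integrable[OF _ square_integrable] integrable_ident[of "\<lambda>y. y" i] by simp
  show ?thesis
  proof (rule strong_law_nonneg_uncorrelated)
    show "integrable M (\<lambda>x. Y i x * Y j x)" for i j
      by (cases "i = j") (simp_all add: integrable_sq indep_var_integrable[OF indep] integrable)
    show "expectation (Y i) = expectation (Y 0)" for i
      using expectation_ident[of "\<lambda>y. y" i] by simp
    show "expectation (\<lambda>x. (Y i x)\<^sup>2) \<le> expectation (\<lambda>x. (Y 0 x)\<^sup>2)" for i
      using expectation_ident[of "\<lambda>y. y\<^sup>2" i] by simp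
    show "expectation (\<lambda>x. Y i x * Y j x) = (expectation (Y 0))\<^sup>2" if "i \<noteq> j" for i j
      using indep_var_lebesgue_integral[OF indep[OF that] integrable integrable]
        expectation_ident[of "\<lambda>y. y" i] expectation_ident[of "\<lambda>y. y" j]
      by (simp add: power2_eq_square)
  qed (simp_all add: nonneg)
qed

lemma (in prob_space) strong_law_pairwise_indep:
  fixes Y :: "nat \<Rightarrow> 'a \<Rightarrow> real"
  assumes [measurable]: "\<And>i. Y i \<in> borel_measurable M"
    and ident: "\<And>i. distr M borel (Y i) = distr M borel (Y 0)"
    and indep: "\<And>i j. i \<noteq> j \<Longrightarrow> indep_var borel (Y i) borel (Y j)"
    and square_integrable: "integrable M (\<lambda>x. (Y 0 x)\<^sup>2)"
  shows "AE x in M. (\<lambda>m. (\<Sum>i<m. Y i x) / real m) \<longlonglongrightarrow> expectation (Y 0)"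
proof -
  have part: "AE x in M. (\<lambda>m. (\<Sum>i<m. g (Y i x)) / real m) \<longlonglongrightarrow> expectation (\<lambda>x. g (Y 0 x))"
    if [measurable]: "g \<in> borel_measurable borel" and g: "\<And>y. 0 \<le> g y" "\<And>y. g y \<le> \<bar>y\<bar>" for g
  proof (rule strong_law_nonneg_pairwise_indep)
    show "distr M borel (\<lambda>x. g (Y i x)) = distr M borel (\<lambda>x. g (Y 0 x))" for i
      using distr_distr[of g borel borel "Y i" M] distr_distr[of g borel borel "Y 0" M]
      by (simp add: ident[of i] comp_def)
    show "indep_var borel (\<lambda>x. g (Y i x)) borel (\<lambda>x. g (Y j x))" if "i \<noteq> j" for i j
      using indep_var_compose[OF indep[OF that], of g borel g borel] by (simp add: comp_def)
    have "(g y)\<^sup>2 \<le> y\<^sup>2" for y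
      using power_mono[OF g(2)[of y] g(1)[of y], of 2] by simp
    then show "integrable M (\<lambda>x. (g (Y 0 x))\<^sup>2)"
      by (intro Bochner_Integration.integrable_bound[OF square_integrable]) auto
  qed (simp_all add: g)
  have split: "max y 0 - max (- y) 0 = y" for y :: real
    by (simp add: max_def)
  have "expectation (Y 0) = expectation (\<lambda>x. max (Y 0 x) 0 - max (- Y 0 x) 0)"
    by (simp only: split)
  also have "\<dots> = expectation (\<lambda>x. max (Y 0 x) 0) - expectation (\<lambda>x. max (- Y 0 x) 0)"
    using square_integrable_imp_integrable[OF _ square_integrable]
    by (intro Bochner_Integration.integral_diff) auto
  finally have expectation_split: "expectation (Y 0) = \<dots>" .
  have average_split: "(\<Sum>i<m. Y i x) / real m
      = (\<Sum>i<m. max (Y i x) 0) / real m - (\<Sum>i<m. max (- Y i x) 0) / real m" for m x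
    by (simp only: sum_subtractf[symmetric] diff_divide_distrib[symmetric] split)
  have "AE x in M. (\<lambda>m. (\<Sum>i<m. max (Y i x) 0) / real m) \<longlonglongrightarrow> expectation (\<lambda>x. max (Y 0 x) 0)"
    and "AE x in M. (\<lambda>m. (\<Sum>i<m. max (- Y i x) 0) / real m) \<longlonglongrightarrow> expectation (\<lambda>x. max (- Y 0 x) 0)"
    by (rule part; auto)+
  then show ?thesis
  proof eventually_elim
    case (elim x)
    then show ?case
      unfolding average_split expectation_split by (rule tendsto_diff)
  qed
qed

section \<open>Limits of parametrised averages and integrals\<close>

lemma LIMSEQ_of_lipschitz_on_Rats:
  fixes f :: "nat \<Rightarrow> real \<Rightarrow> real" and F :: "real \<Rightarrow> real"
  assumes rats: "\<And>q. q \<in> \<rat> \<Longrightarrow> (\<lambda>m. f m q) \<longlonglongrightarrow> F q"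
    and K: "K \<longlonglongrightarrow> K0"
    and lipschitz_f: "\<And>m a b. \<bar>f m a - f m b\<bar> \<le> K m * \<bar>a - b\<bar>"
    and lipschitz_F: "\<And>a b. \<bar>F a - F b\<bar> \<le> c * \<bar>a - b\<bar>"
  shows "(\<lambda>m. f m t) \<longlonglongrightarrow> F t"
proof (rule tendstoI)
  fix e :: real
  assume "0 < e"
  define B where "B = \<bar>K0\<bar> + 1 + \<bar>c\<bar>"
  have "0 < B"
    unfolding B_def by simp
  then obtain q where q: "q \<in> \<rat>" "\<bar>t - q\<bar> < e / (2 * B)"
    using Rats_dense_in_real[of "t - e / (2 * B)" t] \<open>0 < e\<close> by (auto simp: abs_if)
  have "\<forall>\<^sub>F m in sequentially. dist (f m q) (F q) < e / 2"
    using tendstoD[OF rats[OF q(1)], of "e / 2"] \<open>0 < e\<close> by simp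
  moreover have "\<forall>\<^sub>F m in sequentially. dist (K m) K0 < 1"
    using tendstoD[OF K] by simp
  ultimately show "\<forall>\<^sub>F m in sequentially. dist (f m t) (F t) < e"
  proof eventually_elim
    case (elim m)
    have "K m \<le> \<bar>K0\<bar> + 1"
      using elim(2) abs_ge_self[of K0] by (simp add: dist_real_def abs_less_iff)
    then have "\<bar>f m t - f m q\<bar> \<le> (\<bar>K0\<bar> + 1) * \<bar>t - q\<bar>"
      using lipschitz_f[of m t q] by (meson abs_ge_zero mult_right_mono order_trans)
    moreover have "\<bar>F q - F t\<bar> \<le> \<bar>c\<bar> * \<bar>t - q\<bar>"
      using lipschitz_F[of q t]
      by (metis abs_ge_self abs_minus_commute mult_right_mono abs_ge_zero order_trans)
    moreover have "B * \<bar>t - q\<bar> \<le> e / 2"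
      using q(2) \<open>0 < B\<close> by (simp add: field_simps)
    ultimately have "\<bar>f m t - f m q\<bar> + \<bar>F q - F t\<bar> \<le> e / 2"
      unfolding B_def by (simp add: algebra_simps)
    moreover have "\<bar>f m t - F t\<bar> \<le> \<bar>f m t - f m q\<bar> + \<bar>f m q - F q\<bar> + \<bar>F q - F t\<bar>"
      by linarith
    ultimately show ?case
      using elim(1) by (simp add: dist_real_def)
  qed
qed

lemma average_lipschitz:
  assumes "\<And>a b v. \<bar>\<phi> a v - \<phi> b v\<bar> \<le> C * w v * \<bar>a - b\<bar>"
  shows "\<bar>(\<Sum>i<m. \<phi> a (ns i)) / real m - (\<Sum>i<m. \<phi> b (ns i)) / real m\<bar>
           \<le> C * ((\<Sum>i<m. w (ns i)) / real m) * \<bar>a - b\<bar>"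
proof -
  have "\<bar>(\<Sum>i<m. \<phi> a (ns i)) / real m - (\<Sum>i<m. \<phi> b (ns i)) / real m\<bar>
      = \<bar>\<Sum>i<m. \<phi> a (ns i) - \<phi> b (ns i)\<bar> / real m"
    by (simp add: diff_divide_distrib[symmetric] sum_subtractf)
  also have "\<dots> \<le> (\<Sum>i<m. C * w (ns i) * \<bar>a - b\<bar>) / real m"
    by (intro divide_right_mono order_trans[OF sum_abs] sum_mono assms) simp
  also have "\<dots> = C * ((\<Sum>i<m. w (ns i)) / real m) * \<bar>a - b\<bar>"
    by (simp add: sum_distrib_left sum_distrib_right sum_divide_distrib mult_ac)
  finally show ?thesis .
qed

lemma integral_lipschitz:
  fixes \<phi> :: "real \<Rightarrow> 'a \<Rightarrow> real"
  assumes lipschitz: "\<And>a b x. \<bar>\<phi> a x - \<phi> b x\<bar> \<le> C * w x * \<bar>a - b\<bar>"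
    and integrable: "\<And>a. integrable M (\<phi> a)" "integrable M w"
  shows "\<bar>integral\<^sup>L M (\<phi> a) - integral\<^sup>L M (\<phi> b)\<bar> \<le> C * integral\<^sup>L M w * \<bar>a - b\<bar>"
proof -
  have "\<bar>integral\<^sup>L M (\<phi> a) - integral\<^sup>L M (\<phi> b)\<bar> = \<bar>\<integral>x. \<phi> a x - \<phi> b x \<partial>M\<bar>"
    using integrable by simp
  also have "\<dots> \<le> (\<integral>x. \<bar>\<phi> a x - \<phi> b x\<bar> \<partial>M)"
    by (rule integral_abs_bound)
  also have "\<dots> \<le> (\<integral>x. C * \<bar>a - b\<bar> * w x \<partial>M)"
    using integrable lipschitz by (intro integral_mono) (auto simp: mult_ac)
  also have "\<dots> = C * integral\<^sup>L M w * \<bar>a - b\<bar>"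
    by (simp add: mult_ac)
  finally show ?thesis .
qed

lemma tendsto_integral_dominated_at:
  fixes s :: "real \<Rightarrow> 'a \<Rightarrow> real"
  assumes [measurable]: "\<And>t. s t \<in> borel_measurable M" "f \<in> borel_measurable M"
    and "integrable M w"
    and lim: "\<And>x. x \<in> space M \<Longrightarrow> ((\<lambda>t. s t x) \<longlongrightarrow> f x) (at a)"
    and bound: "\<And>t x. t \<noteq> a \<Longrightarrow> x \<in> space M \<Longrightarrow> \<bar>s t x\<bar> \<le> w x"
  shows "((\<lambda>t. integral\<^sup>L M (s t)) \<longlongrightarrow> integral\<^sup>L M f) (at a)"
  unfolding tendsto_at_iff_sequentially comp_def
proof (intro allI impI)
  fix X :: "nat \<Rightarrow> real"
  assume X: "\<forall>i. X i \<in> UNIV - {a}" "X \<longlonglongrightarrow> a"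
  then have "filterlim X (at a) sequentially"
    by (intro filterlim_atI) auto
  then show "(\<lambda>i. integral\<^sup>L M (s (X i))) \<longlonglongrightarrow> integral\<^sup>L M f"
    using X(1) by (intro integral_dominated_convergence[OF _ _ \<open>integrable M w\<close>])
      (auto intro: filterlim_compose[OF lim] bound)
qed

lemma (in prob_space) expectation_pos:
  fixes f :: "'a \<Rightarrow> real"
  assumes "integrable M f" and "\<And>x. x \<in> space M \<Longrightarrow> 0 < f x"
  shows "0 < expectation f"
proof -
  have pos: "AE x in M. 0 < f x"
    using assms(2) by simp
  then have nonneg: "AE x in M. 0 \<le> f x"
    by eventually_elim simp
  have "expectation f \<noteq> 0"
  proof
    assume "expectation f = 0"
    then have "AE x in M. f x = 0"
      using integral_nonneg_eq_0_iff_AE[OF assms(1) nonneg] by simp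
    with pos have "AE x in M. False"
      by eventually_elim simp
    then show False
      by simp
  qed
  then show ?thesis
    using integral_nonneg_AE[OF nonneg] by simp
qed

section \<open>Samples of standard Gaussian vectors\<close>

lemma (in prob_space) AE_indep_mult_add_neq_0:
  fixes X Y :: "'a \<Rightarrow> real"
  assumes indep: "indep_var borel X borel Y"
    and no_atom: "\<And>c. emeasure (distr M borel X) {c} = 0"
    and "a \<noteq> 0"
  shows "AE \<omega> in M. a * X \<omega> + Y \<omega> \<noteq> 0"
proof -
  have [measurable]: "X \<in> borel_measurable M" "Y \<in> borel_measurable M"
    using indep by (auto dest: indep_var_rv1 indep_var_rv2)
  interpret DX: prob_space "distr M borel X" by (rule prob_space_distr) simp
  interpret DY: prob_space "distr M borel Y" by (rule prob_space_distr) simp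
  interpret D: pair_sigma_finite "distr M borel X" "distr M borel Y" ..
  define Z where "Z = {p \<in> space (borel \<Otimes>\<^sub>M borel). a * fst p + snd p = (0 :: real)}"
  have [measurable]: "Z \<in> sets (borel \<Otimes>\<^sub>M borel)"
    unfolding Z_def by measurable
  have "emeasure M {\<omega> \<in> space M. a * X \<omega> + Y \<omega> = 0} = emeasure M ((\<lambda>\<omega>. (X \<omega>, Y \<omega>)) -` Z \<inter> space M)"
    by (rule arg_cong[where f="emeasure M"]) (auto simp: Z_def space_pair_measure)
  also have "\<dots> = emeasure (distr M (borel \<Otimes>\<^sub>M borel) (\<lambda>\<omega>. (X \<omega>, Y \<omega>))) Z"
    by (rule emeasure_distr[symmetric]) measurable
  also have "\<dots> = emeasure (distr M borel X \<Otimes>\<^sub>M distr M borel Y) Z"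
    using indep by (simp add: indep_var_distribution_eq)
  also have "\<dots> = (\<integral>\<^sup>+y. emeasure (distr M borel X) ((\<lambda>x. (x, y)) -` Z) \<partial>distr M borel Y)"
    by (rule D.emeasure_pair_measure_alt2)
       (simp add: sets_pair_measure_cong[of "distr M borel X" borel "distr M borel Y" borel])
  also have "\<dots> = (\<integral>\<^sup>+y. 0 \<partial>distr M borel Y)"
  proof (rule nn_integral_cong)
    fix y
    have "(\<lambda>x. (x, y)) -` Z = {- y / a}"
      using \<open>a \<noteq> 0\<close> by (auto simp: Z_def space_pair_measure field_simps)
    then show "emeasure (distr M borel X) ((\<lambda>x. (x, y)) -` Z) = 0"
      by (simp add: no_atom)
  qed
  finally have "emeasure M {\<omega> \<in> space M. a * X \<omega> + Y \<omega> = 0} = 0"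
    by simp
  moreover have "{\<omega> \<in> space M. a * X \<omega> + Y \<omega> = 0} \<in> sets M"
    by measurable
  ultimately show ?thesis
    by (subst AE_iff_measurable[where N="{\<omega> \<in> space M. a * X \<omega> + Y \<omega> = 0}"]) auto
qed

definition std_normal_measure :: "real measure" where
  "std_normal_measure = density lborel (\<lambda>t. ennreal (std_normal_density t))"

lemma prob_space_std_normal_measure: "prob_space std_normal_measure"
  unfolding std_normal_measure_def by (rule prob_space_normal_density) simp

lemma sets_std_normal_measure [simp, measurable_cong]: "sets std_normal_measure = sets borel"
  unfolding std_normal_measure_def by simp

lemma emeasure_std_normal_measure_singleton: "emeasure std_normal_measure {c} = 0"
proof -
  have "AE x in lborel. x \<in> {c} \<longrightarrow> ennreal (std_normal_density x) = 0"
    using AE_lborel_singleton[of c] by eventually_elim simp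
  then have "{c} \<in> null_sets std_normal_measure"
    unfolding std_normal_measure_def by (subst null_sets_density_iff) auto
  then show ?thesis
    by (rule null_setsD1)
qed

lemma borel_measurable_vecI:
  fixes f :: "'a \<Rightarrow> real ^ 'n"
  assumes "\<And>k. (\<lambda>x. f x $ k) \<in> borel_measurable M"
  shows "f \<in> borel_measurable M"
  using assms by (subst borel_measurable_euclidean_space) (auto simp: Basis_vec_def inner_axis)

lemma borel_measurable_vec_lambda:
  "(vec_lambda :: ('n \<Rightarrow> real) \<Rightarrow> real ^ 'n) \<in> borel_measurable (PiM UNIV (\<lambda>_. borel))"
  by (rule borel_measurable_vecI) simp

lemma norm_sq_eq_sum_components: "(norm (v :: real ^ 'n))\<^sup>2 = (\<Sum>j\<in>UNIV. (v $ j)\<^sup>2)"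
  unfolding power2_norm_eq_inner inner_vec_def by (simp add: power2_eq_square)

lemma inner_mult_component_eq:
  fixes v y :: "real ^ 'n"
  shows "(v \<bullet> y) * v $ k = (\<Sum>j\<in>UNIV. y $ j * (v $ j * v $ k))"
  by (simp add: inner_vec_def sum_distrib_left sum_distrib_right mult_ac)

locale std_normal_samples = prob_space M for M :: "'w measure" +
  fixes n :: "nat \<Rightarrow> 'w \<Rightarrow> real ^ 'd :: finite"
  assumes indep_coords: "indep_vars (\<lambda>_. borel) (\<lambda>(i, k) \<omega>. n i \<omega> $ k) UNIV"
    and std_normal_coords:
      "\<And>i k. distributed M lborel (\<lambda>\<omega>. n i \<omega> $ k) (\<lambda>t. ennreal (std_normal_density t))"
begin

lemma measurable_coord [measurable]: "(\<lambda>\<omega>. n i \<omega> $ k) \<in> borel_measurable M"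
  using distributed_measurable[OF std_normal_coords[of i k]] by simp

lemma measurable_sample [measurable]: "n i \<in> borel_measurable M"
  by (rule borel_measurable_vecI) simp

lemma distr_coord: "distr M borel (\<lambda>\<omega>. n i \<omega> $ k) = std_normal_measure"
proof -
  have "distr M lborel (\<lambda>\<omega>. n i \<omega> $ k) = std_normal_measure"
    unfolding std_normal_measure_def by (rule distributed_distr_eq_density[OF std_normal_coords])
  moreover have "distr M borel (\<lambda>\<omega>. n i \<omega> $ k) = distr M lborel (\<lambda>\<omega>. n i \<omega> $ k)"
    by (rule distr_cong) auto
  ultimately show ?thesis
    by simp
qed

lemma indep_var_coord_blocks:
  assumes "A \<inter> B = {}"
    and f: "f \<in> borel_measurable (PiM A (\<lambda>_. borel))" and g: "g \<in> borel_measurable (PiM B (\<lambda>_. borel))"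
  shows "indep_var borel (\<lambda>\<omega>. f (\<lambda>(i, k)\<in>A. n i \<omega> $ k)) borel (\<lambda>\<omega>. g (\<lambda>(i, k)\<in>B. n i \<omega> $ k))"
proof -
  have "indep_var (PiM A (\<lambda>_. borel)) (\<lambda>\<omega>. restrict (\<lambda>p. (\<lambda>(i, k) \<omega>. n i \<omega> $ k) p \<omega>) A)
                  (PiM B (\<lambda>_. borel)) (\<lambda>\<omega>. restrict (\<lambda>p. (\<lambda>(i, k) \<omega>. n i \<omega> $ k) p \<omega>) B)"
    by (rule indep_var_restrict[OF indep_coords assms(1)]) simp_all
  from indep_var_compose[OF this f g] show ?thesis
    by (simp add: comp_def case_prod_unfold)
qed

lemma indep_samples:
  assumes "i \<noteq> j"
  shows "indep_var borel (n i) borel (n j)"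
proof -
  define sample :: "nat \<Rightarrow> (nat \<times> 'd \<Rightarrow> real) \<Rightarrow> real ^ 'd" where "sample i w = (\<chi> k. w (i, k))" for i w
  have "sample i \<in> borel_measurable (PiM ({i} \<times> UNIV) (\<lambda>_. borel))" for i
    unfolding sample_def
    by (rule borel_measurable_vecI, simp only: vec_lambda_beta, rule measurable_component_singleton) simp
  then have "indep_var borel (\<lambda>\<omega>. sample i (\<lambda>(i, k)\<in>{i} \<times> UNIV. n i \<omega> $ k))
      borel (\<lambda>\<omega>. sample j (\<lambda>(i, k)\<in>{j} \<times> UNIV. n i \<omega> $ k))"
    using assms by (intro indep_var_coord_blocks) auto
  moreover have "(\<lambda>\<omega>. sample i (\<lambda>(i, k)\<in>{i} \<times> UNIV. n i \<omega> $ k)) = n i" for i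
    by (simp add: sample_def fun_eq_iff vec_eq_iff)
  ultimately show ?thesis
    by simp
qed

lemma indep_coords_of_sample:
  assumes "j \<noteq> k"
  shows "indep_var borel (\<lambda>\<omega>. n i \<omega> $ j) borel (\<lambda>\<omega>. n i \<omega> $ k)"
proof -
  have "indep_var borel (\<lambda>\<omega>. (\<lambda>w. w (i, j)) (\<lambda>(i, k)\<in>{(i, j)}. n i \<omega> $ k))
      borel (\<lambda>\<omega>. (\<lambda>w. w (i, k)) (\<lambda>(i, k)\<in>{(i, k)}. n i \<omega> $ k))"
    using assms by (intro indep_var_coord_blocks) auto
  then show ?thesis
    by simp
qed

lemma AE_inner_sample_neq_0:
  assumes "y \<noteq> 0"
  shows "AE \<omega> in M. n i \<omega> \<bullet> y \<noteq> 0"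
proof -
  obtain k where k: "y $ k \<noteq> 0"
    using assms by (auto simp: vec_eq_iff)
  define rest where "rest w = (\<Sum>j\<in>UNIV - {k}. w (i, j) * y $ j)" for w :: "nat \<times> 'd \<Rightarrow> real"
  have "rest \<in> borel_measurable (PiM ({i} \<times> (UNIV - {k})) (\<lambda>_. borel))"
    unfolding rest_def by measurable
  moreover have rest_eq: "rest (\<lambda>(i, k)\<in>{i} \<times> (UNIV - {k}). n i \<omega> $ k)
      = (\<Sum>j\<in>UNIV - {k}. n i \<omega> $ j * y $ j)" for \<omega>
    unfolding rest_def by (rule sum.cong) auto
  ultimately have "indep_var borel (\<lambda>\<omega>. n i \<omega> $ k) borel (\<lambda>\<omega>. \<Sum>j\<in>UNIV - {k}. n i \<omega> $ j * y $ j)"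
    using indep_var_coord_blocks[of "{(i, k)}" "{i} \<times> (UNIV - {k})" "\<lambda>w. w (i, k)" rest]
    unfolding rest_eq by simp
  moreover have "emeasure (distr M borel (\<lambda>\<omega>. n i \<omega> $ k)) {c} = 0" for c
    by (simp add: distr_coord emeasure_std_normal_measure_singleton)
  ultimately have "AE \<omega> in M. y $ k * n i \<omega> $ k + (\<Sum>j\<in>UNIV - {k}. n i \<omega> $ j * y $ j) \<noteq> 0"
    using k by (rule AE_indep_mult_add_neq_0)
  moreover have "n i \<omega> \<bullet> y = y $ k * n i \<omega> $ k + (\<Sum>j\<in>UNIV - {k}. n i \<omega> $ j * y $ j)" for \<omega>
    unfolding inner_vec_def by (simp add: sum.remove[of UNIV k] mult.commute)
  ultimately show ?thesis
    by simp
qed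

lemma distr_sample:
  "distr M borel (n i) = distr (PiM UNIV (\<lambda>_ :: 'd. std_normal_measure)) borel vec_lambda"
proof -
  have sets_PiM: "sets (PiM I (\<lambda>_. std_normal_measure)) = sets (PiM I (\<lambda>_. borel))" for I :: "'b set"
    by (rule sets_PiM_cong) simp_all
  define W where "W \<omega> = (\<lambda>p\<in>UNIV. (\<lambda>(i, k) \<omega>. n i \<omega> $ k) p \<omega>)" for \<omega>
  define R where "R w = (\<lambda>k\<in>UNIV. w (i, k))" for w :: "nat \<times> 'd \<Rightarrow> real"
  have W_measurable: "W \<in> M \<rightarrow>\<^sub>M PiM UNIV (\<lambda>_. borel)"
    unfolding W_def by (rule measurable_restrict) (simp split: prod.split)
  have R_measurable: "R \<in> PiM UNIV (\<lambda>_. std_normal_measure) \<rightarrow>\<^sub>M PiM UNIV (\<lambda>_. std_normal_measure)"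
    unfolding R_def by (intro measurable_restrict measurable_component_singleton) simp
  have vec_measurable:
    "vec_lambda \<in> PiM UNIV (\<lambda>_ :: 'd. std_normal_measure) \<rightarrow>\<^sub>M (borel :: (real ^ 'd) measure)"
    using borel_measurable_vec_lambda by (simp add: measurable_cong_sets[OF sets_PiM refl])
  have "distr M (PiM UNIV (\<lambda>_. borel)) W = PiM UNIV (\<lambda>p. distr M borel ((\<lambda>(i, k) \<omega>. n i \<omega> $ k) p))"
    using indep_coords unfolding W_def
    by (subst (asm) indep_vars_iff_distr_eq_PiM) (auto split: prod.split)
  also have "\<dots> = PiM UNIV (\<lambda>_. std_normal_measure)"
    by (intro PiM_cong) (auto simp: distr_coord split: prod.split)
  finally have W_distr: "distr M (PiM UNIV (\<lambda>_. borel)) W = PiM UNIV (\<lambda>_. std_normal_measure)" .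
  have R_distr: "distr (PiM UNIV (\<lambda>_. std_normal_measure)) (PiM UNIV (\<lambda>_. std_normal_measure)) R
      = PiM UNIV (\<lambda>_ :: 'd. std_normal_measure)"
    unfolding R_def
    using distr_PiM_reindex[where M="\<lambda>_. std_normal_measure" and K=UNIV and I=UNIV and f="Pair i"]
    by (simp add: prob_space_std_normal_measure inj_on_def)
  have "n i = (vec_lambda \<circ> R) \<circ> W"
    by (simp add: fun_eq_iff R_def W_def vec_eq_iff)
  then have "distr M borel (n i) = distr (distr M (PiM UNIV (\<lambda>_. borel)) W) borel (vec_lambda \<circ> R)"
    using measurable_comp[OF R_measurable vec_measurable] W_measurable
    by (simp add: distr_distr measurable_cong_sets[OF sets_PiM refl])
  also have "\<dots> = distr (distr (PiM UNIV (\<lambda>_. std_normal_measure)) (PiM UNIV (\<lambda>_. std_normal_measure)) R)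
      borel vec_lambda"
    unfolding W_distr by (rule distr_distr[OF vec_measurable R_measurable, symmetric])
  finally show ?thesis
    unfolding R_distr .
qed

lemma integrable_coord_power: "integrable M (\<lambda>\<omega>. (n i \<omega> $ k) ^ p)"
  using distributed_integrable[OF std_normal_coords[of i k], of "\<lambda>x. x ^ p"]
    integrable_std_normal_moment[of p]
  by simp

lemma expectation_coord: "expectation (\<lambda>\<omega>. n i \<omega> $ k) = 0"
  by (rule standard_normal_distributed_expectation[OF std_normal_coords])

lemma expectation_coord_sq: "expectation (\<lambda>\<omega>. (n i \<omega> $ k)\<^sup>2) = 1"
  using standard_normal_distributed_variance[OF std_normal_coords[of i k]]
  by (simp add: expectation_coord)

lemma integrable_coord_mult: "integrable M (\<lambda>\<omega>. n i \<omega> $ j * n i \<omega> $ k)"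
proof (cases "j = k")
  case True
  then show ?thesis
    using integrable_coord_power[of i k 2] by (simp add: power2_eq_square)
next
  case False
  then show ?thesis
    using integrable_coord_power[of i _ 1]
    by (intro indep_var_integrable indep_coords_of_sample) simp_all
qed

lemma expectation_coord_mult: "expectation (\<lambda>\<omega>. n i \<omega> $ j * n i \<omega> $ k) = (if j = k then 1 else 0)"
proof (cases "j = k")
  case True
  then show ?thesis
    using expectation_coord_sq[of i k] by (simp add: power2_eq_square)
next
  case False
  then show ?thesis
    using integrable_coord_power[of i _ 1]
    by (simp add: indep_var_lebesgue_integral[OF indep_coords_of_sample] expectation_coord)
qed

lemma integrable_inner_mult_coord: "integrable M (\<lambda>\<omega>. (n i \<omega> \<bullet> y) * n i \<omega> $ k)"
  unfolding inner_mult_component_eq by (simp add: integrable_coord_mult)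

lemma expectation_inner_mult_coord: "expectation (\<lambda>\<omega>. (n i \<omega> \<bullet> y) * n i \<omega> $ k) = y $ k"
  unfolding inner_mult_component_eq
  by (simp add: Bochner_Integration.integral_sum integrable_coord_mult expectation_coord_mult
      if_distrib cong: if_cong)

lemma integrable_norm_sq_sample: "integrable M (\<lambda>\<omega>. (norm (n i \<omega>))\<^sup>2)"
  unfolding norm_sq_eq_sum_components by (simp add: integrable_coord_power)

lemma AE_average_tendsto_expectation:
  assumes [measurable]: "h \<in> borel_measurable borel"
    and "integrable M (\<lambda>\<omega>. (h (n 0 \<omega>))\<^sup>2)"
  shows "AE \<omega> in M. (\<lambda>m. (\<Sum>i<m. h (n i \<omega>)) / real m) \<longlonglongrightarrow> expectation (\<lambda>\<omega>. h (n 0 \<omega>))"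
proof (rule strong_law_pairwise_indep)
  show "distr M borel (\<lambda>\<omega>. h (n i \<omega>)) = distr M borel (\<lambda>\<omega>. h (n 0 \<omega>))" for i
    using distr_distr[of h borel borel "n i" M] distr_distr[of h borel borel "n 0" M]
    by (simp add: distr_sample comp_def)
  show "indep_var borel (\<lambda>\<omega>. h (n i \<omega>)) borel (\<lambda>\<omega>. h (n j \<omega>))" if "i \<noteq> j" for i j
    using indep_var_compose[OF indep_samples[OF that], of h borel h borel] by (simp add: comp_def)
qed (simp_all add: assms(2))

lemma AE_average_norm_sq_tendsto:
  "AE \<omega> in M. (\<lambda>m. (\<Sum>i<m. (norm (n i \<omega>))\<^sup>2) / real m) \<longlonglongrightarrow> real CARD('d)"
proof -
  have "AE \<omega> in M. \<forall>j. (\<lambda>m. (\<Sum>i<m. (n i \<omega> $ j)\<^sup>2) / real m) \<longlonglongrightarrow> 1"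
    unfolding AE_all_countable
  proof
    fix j :: 'd
    have "integrable M (\<lambda>\<omega>. ((n 0 \<omega> $ j)\<^sup>2)\<^sup>2)"
      using integrable_coord_power[of 0 j 4] by (simp add: power_mult[symmetric])
    then show "AE \<omega> in M. (\<lambda>m. (\<Sum>i<m. (n i \<omega> $ j)\<^sup>2) / real m) \<longlonglongrightarrow> 1"
      using AE_average_tendsto_expectation[of "\<lambda>v. (v $ j)\<^sup>2"] by (simp add: expectation_coord_sq)
  qed
  then show ?thesis
  proof eventually_elim
    case (elim \<omega>)
    have "(\<lambda>m. \<Sum>j\<in>UNIV. (\<Sum>i<m. (n i \<omega> $ j)\<^sup>2) / real m) \<longlonglongrightarrow> (\<Sum>j\<in>(UNIV :: 'd set). 1)"
      using elim by (intro tendsto_sum) auto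
    then show ?case
      unfolding norm_sq_eq_sum_components by (simp add: sum.swap[of _ "{..<_}"] sum_divide_distrib)
  qed
qed

lemma AE_average_one_plus_norm_sq_tendsto:
  "AE \<omega> in M. (\<lambda>m. (\<Sum>i<m. 1 + (norm (n i \<omega>))\<^sup>2) / real m) \<longlonglongrightarrow> 1 + real CARD('d)"
  using AE_average_norm_sq_tendsto
proof eventually_elim
  case (elim \<omega>)
  have "(\<lambda>m. real m / real m) \<longlonglongrightarrow> 1"
    by (rule Lim_transform_eventually[OF tendsto_const eventually_mono[OF eventually_gt_at_top[of 0]]])
       simp
  then have "(\<lambda>m. real m / real m + (\<Sum>i<m. (norm (n i \<omega>))\<^sup>2) / real m) \<longlonglongrightarrow> 1 + real CARD('d)"
    using elim by (rule tendsto_add)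
  then show ?case
    by (simp add: sum.distrib add_divide_distrib)
qed

lemma integrable_softp_sample: "l < L \<Longrightarrow> integrable M (\<lambda>\<omega>. softp L x (n i \<omega>) \<beta> l)"
  by (rule Bochner_Integration.integrable_bound[where f="\<lambda>_. 1 :: real"]) (simp_all add: abs_softp_le_1)

lemma integrable_softp_mult_coord:
  assumes "l < L"
  shows "integrable M (\<lambda>\<omega>. softp L x (n i \<omega>) \<beta> l * n i \<omega> $ k)"
proof (rule Bochner_Integration.integrable_bound[OF integrable_coord_power[of i k 1]])
  have "\<bar>softp L x v \<beta> l * t\<bar> \<le> \<bar>t\<bar>" for v and t :: real
    by (simp add: abs_mult mult_left_le_one_le abs_softp_le_1[OF assms])
  then show "AE \<omega> in M. norm (softp L x (n i \<omega>) \<beta> l * n i \<omega> $ k) \<le> norm ((n i \<omega> $ k) ^ 1)"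
    by simp
qed simp

lemma expectation_softp_pos: "l < L \<Longrightarrow> 0 < expectation (\<lambda>\<omega>. softp L x (n i \<omega>) \<beta> l)"
  by (intro expectation_pos integrable_softp_sample softp_pos)

lemma AE_average_tendsto_expectation_all_params:
  fixes \<phi> :: "real \<Rightarrow> real ^ 'd \<Rightarrow> real"
  assumes [measurable]: "\<And>b. \<phi> b \<in> borel_measurable borel"
    and square_integrable: "\<And>b. integrable M (\<lambda>\<omega>. (\<phi> b (n 0 \<omega>))\<^sup>2)"
    and lipschitz: "\<And>a b v. \<bar>\<phi> a v - \<phi> b v\<bar> \<le> C * (1 + (norm v)\<^sup>2) * \<bar>a - b\<bar>"
  shows "AE \<omega> in M. \<forall>\<beta>. (\<lambda>m. (\<Sum>i<m. \<phi> \<beta> (n i \<omega>)) / real m) \<longlonglongrightarrow> expectation (\<lambda>\<omega>. \<phi> \<beta> (n 0 \<omega>))"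
proof -
  have integrable_\<phi>: "integrable M (\<lambda>\<omega>. \<phi> b (n 0 \<omega>))" for b
    by (rule square_integrable_imp_integrable[OF _ square_integrable]) simp
  have "AE \<omega> in M. \<forall>q\<in>\<rat>. (\<lambda>m. (\<Sum>i<m. \<phi> q (n i \<omega>)) / real m) \<longlonglongrightarrow> expectation (\<lambda>\<omega>. \<phi> q (n 0 \<omega>))"
    unfolding AE_ball_countable[OF countable_rat]
    by (intro ballI AE_average_tendsto_expectation square_integrable) simp
  moreover note AE_average_one_plus_norm_sq_tendsto
  ultimately show ?thesis
  proof eventually_elim
    case (elim \<omega>)
    show ?case
    proof
      fix \<beta> :: real
      show "(\<lambda>m. (\<Sum>i<m. \<phi> \<beta> (n i \<omega>)) / real m) \<longlonglongrightarrow> expectation (\<lambda>\<omega>. \<phi> \<beta> (n 0 \<omega>))"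
      proof (rule LIMSEQ_of_lipschitz_on_Rats[where f="\<lambda>m b. (\<Sum>i<m. \<phi> b (n i \<omega>)) / real m"
            and F="\<lambda>b. expectation (\<lambda>\<omega>. \<phi> b (n 0 \<omega>))"])
        show "(\<lambda>m. (\<Sum>i<m. \<phi> q (n i \<omega>)) / real m) \<longlonglongrightarrow> expectation (\<lambda>\<omega>. \<phi> q (n 0 \<omega>))" if "q \<in> \<rat>" for q
          using elim(1) that by (rule bspec)
        show "(\<lambda>m. C * ((\<Sum>i<m. 1 + (norm (n i \<omega>))\<^sup>2) / real m)) \<longlonglongrightarrow> C * (1 + real CARD('d))"
          using elim(2) by (rule tendsto_mult_left)
        show "\<bar>(\<Sum>i<m. \<phi> a (n i \<omega>)) / real m - (\<Sum>i<m. \<phi> b (n i \<omega>)) / real m\<bar>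
            \<le> C * ((\<Sum>i<m. 1 + (norm (n i \<omega>))\<^sup>2) / real m) * \<bar>a - b\<bar>" for m a b
          by (rule average_lipschitz[where w="\<lambda>v. 1 + (norm v)\<^sup>2"]) (rule lipschitz)
        show "\<bar>expectation (\<lambda>\<omega>. \<phi> a (n 0 \<omega>)) - expectation (\<lambda>\<omega>. \<phi> b (n 0 \<omega>))\<bar>
            \<le> C * expectation (\<lambda>\<omega>. 1 + (norm (n 0 \<omega>))\<^sup>2) * \<bar>a - b\<bar>" for a b
          using integrable_norm_sq_sample[of 0]
          by (intro integral_lipschitz[where \<phi>="\<lambda>b \<omega>. \<phi> b (n 0 \<omega>)"] lipschitz integrable_\<phi>) simp
      qed
    qed
  qed
qed

lemma AE_average_softp_tendsto:
  fixes x :: "nat \<Rightarrow> real ^ 'd"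
  assumes "l < L"
  shows "AE \<omega> in M. \<forall>\<beta>.
           (\<lambda>m. (\<Sum>i<m. softp L x (n i \<omega>) \<beta> l) / real m) \<longlonglongrightarrow> expectation (\<lambda>\<omega>. softp L x (n 0 \<omega>) \<beta> l)
         \<and> (\<forall>k. (\<lambda>m. (\<Sum>i<m. softp L x (n i \<omega>) \<beta> l * n i \<omega> $ k) / real m)
                   \<longlonglongrightarrow> expectation (\<lambda>\<omega>. softp L x (n 0 \<omega>) \<beta> l * n 0 \<omega> $ k))"
proof -
  have softp_sq_le: "(softp L x v \<beta> l)\<^sup>2 \<le> 1" for v \<beta>
    by (simp add: abs_square_le_1 abs_softp_le_1[OF assms])
  have "AE \<omega> in M. \<forall>\<beta>. (\<lambda>m. (\<Sum>i<m. softp L x (n i \<omega>) \<beta> l) / real m)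
      \<longlonglongrightarrow> expectation (\<lambda>\<omega>. softp L x (n 0 \<omega>) \<beta> l)"
  proof (rule AE_average_tendsto_expectation_all_params[OF _ _ softp_lipschitz_weighted[OF assms]])
    show "integrable M (\<lambda>\<omega>. (softp L x (n 0 \<omega>) b l)\<^sup>2)" for b
      by (rule Bochner_Integration.integrable_bound[where f="\<lambda>_. 1 :: real"]) (simp_all add: softp_sq_le)
  qed simp
  moreover have "AE \<omega> in M. \<forall>k. \<forall>\<beta>. (\<lambda>m. (\<Sum>i<m. softp L x (n i \<omega>) \<beta> l * n i \<omega> $ k) / real m)
      \<longlonglongrightarrow> expectation (\<lambda>\<omega>. softp L x (n 0 \<omega>) \<beta> l * n 0 \<omega> $ k)"
    unfolding AE_all_countable
  proof
    fix k
    have bound: "(softp L x v \<beta> l * v $ k)\<^sup>2 \<le> (v $ k) ^ 2" for v :: "real ^ 'd" and \<beta>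
      using mult_right_mono[OF softp_sq_le[of v \<beta>], of "(v $ k)\<^sup>2"] by (simp add: power_mult_distrib)
    show "AE \<omega> in M. \<forall>\<beta>. (\<lambda>m. (\<Sum>i<m. softp L x (n i \<omega>) \<beta> l * n i \<omega> $ k) / real m)
        \<longlonglongrightarrow> expectation (\<lambda>\<omega>. softp L x (n 0 \<omega>) \<beta> l * n 0 \<omega> $ k)"
    proof (rule AE_average_tendsto_expectation_all_params[OF _ _
          softp_mult_coord_lipschitz_weighted[OF assms]])
      show "integrable M (\<lambda>\<omega>. (softp L x (n 0 \<omega>) b l * n 0 \<omega> $ k)\<^sup>2)" for b
        by (rule Bochner_Integration.integrable_bound[OF integrable_coord_power[of 0 k 2]])
           (simp_all add: bound)
    qed simp
  qed
  ultimately show ?thesis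
    by eventually_elim blast
qed

lemma tendsto_expectation_softp_at_0:
  assumes "l < L"
  shows "((\<lambda>\<beta>. expectation (\<lambda>\<omega>. softp L x (n 0 \<omega>) \<beta> l)) \<longlongrightarrow> 1 / real L) (at 0)"
proof -
  define K where "K = 2 * (\<Sum>r<L. norm (x r)) * expectation (\<lambda>\<omega>. 1 + (norm (n 0 \<omega>))\<^sup>2)"
  have "\<bar>expectation (\<lambda>\<omega>. softp L x (n 0 \<omega>) \<beta> l) - expectation (\<lambda>\<omega>. softp L x (n 0 \<omega>) 0 l)\<bar>
      \<le> K * \<bar>\<beta> - 0\<bar>" for \<beta>
    unfolding K_def using integrable_norm_sq_sample[of 0]
    by (intro integral_lipschitz[where \<phi>="\<lambda>b \<omega>. softp L x (n 0 \<omega>) b l"] softp_lipschitz_weighted assms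
        integrable_softp_sample) simp
  then have "\<forall>\<^sub>F \<beta> in at 0. norm (expectation (\<lambda>\<omega>. softp L x (n 0 \<omega>) \<beta> l) - 1 / real L) \<le> norm \<beta> * K"
    by (simp add: softp_at_0 prob_space mult.commute)
  with tendsto_ident_at have "((\<lambda>\<beta>. expectation (\<lambda>\<omega>. softp L x (n 0 \<omega>) \<beta> l) - 1 / real L) \<longlongrightarrow> 0) (at 0)"
    by (rule tendsto_0_le)
  then show ?thesis
    by (simp add: LIM_zero_iff)
qed

lemma expectation_softp_mult_coord_div_eq:
  assumes "l < L"
  shows "expectation (\<lambda>\<omega>. softp L x (n 0 \<omega>) \<beta> l * n 0 \<omega> $ k) / \<beta>
           = expectation (\<lambda>\<omega>. (softp L x (n 0 \<omega>) \<beta> l - 1 / real L) / \<beta> * n 0 \<omega> $ k)"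
proof -
  have "(\<lambda>\<omega>. (softp L x (n 0 \<omega>) \<beta> l - 1 / real L) / \<beta> * n 0 \<omega> $ k)
      = (\<lambda>\<omega>. (softp L x (n 0 \<omega>) \<beta> l * n 0 \<omega> $ k - n 0 \<omega> $ k / real L) / \<beta>)"
    by (simp add: fun_eq_iff left_diff_distrib)
  moreover have "expectation (\<lambda>\<omega>. softp L x (n 0 \<omega>) \<beta> l * n 0 \<omega> $ k - n 0 \<omega> $ k / real L)
      = expectation (\<lambda>\<omega>. softp L x (n 0 \<omega>) \<beta> l * n 0 \<omega> $ k)"
    using integrable_softp_mult_coord[OF assms, of x 0 \<beta> k] integrable_coord_power[of 0 k 1]
    by (simp add: expectation_coord)
  ultimately show ?thesis
    by simp
qed

lemma expectation_softp_slope_mult_coord: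
  "expectation (\<lambda>\<omega>. (n 0 \<omega> \<bullet> x l - (\<Sum>r<L. n 0 \<omega> \<bullet> x r) / real L) / real L * n 0 \<omega> $ k)
     = (x l $ k - (\<Sum>r<L. x r $ k) / real L) / real L"
proof -
  have "(\<lambda>\<omega>. (n 0 \<omega> \<bullet> x l - (\<Sum>r<L. n 0 \<omega> \<bullet> x r) / real L) / real L * n 0 \<omega> $ k)
      = (\<lambda>\<omega>. ((n 0 \<omega> \<bullet> x l) * n 0 \<omega> $ k - (\<Sum>r<L. (n 0 \<omega> \<bullet> x r) * n 0 \<omega> $ k) / real L) / real L)"
    by (simp add: fun_eq_iff left_diff_distrib sum_distrib_right)
  then show ?thesis
    by (simp add: integrable_inner_mult_coord expectation_inner_mult_coord
        Bochner_Integration.integral_sum)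
qed

lemma tendsto_expectation_softp_mult_coord_div_at_0:
  fixes x :: "nat \<Rightarrow> real ^ 'd"
  assumes "l < L"
  shows "((\<lambda>\<beta>. expectation (\<lambda>\<omega>. softp L x (n 0 \<omega>) \<beta> l * n 0 \<omega> $ k) / \<beta>)
           \<longlongrightarrow> (x l $ k - (\<Sum>r<L. x r $ k) / real L) / real L) (at 0)"
  unfolding expectation_softp_mult_coord_div_eq[OF assms] expectation_softp_slope_mult_coord[symmetric]
proof (rule tendsto_integral_dominated_at)
  show "integrable M (\<lambda>\<omega>. 2 * (\<Sum>r<L. norm (x r)) * (1 + (norm (n 0 \<omega>))\<^sup>2))"
    using integrable_norm_sq_sample[of 0] by simp
  show "((\<lambda>\<beta>. (softp L x (n 0 \<omega>) \<beta> l - 1 / real L) / \<beta> * n 0 \<omega> $ k) \<longlongrightarrow>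
      (n 0 \<omega> \<bullet> x l - (\<Sum>r<L. n 0 \<omega> \<bullet> x r) / real L) / real L * n 0 \<omega> $ k) (at 0)" for \<omega>
    by (intro tendsto_mult_right softp_slope_at_0 assms)
  show "\<bar>(softp L x (n 0 \<omega>) \<beta> l - 1 / real L) / \<beta> * n 0 \<omega> $ k\<bar>
      \<le> 2 * (\<Sum>r<L. norm (x r)) * (1 + (norm (n 0 \<omega>))\<^sup>2)" if "\<beta> \<noteq> 0" for \<beta> \<omega>
    by (rule abs_softp_slope_mult_coord_le[OF assms that])
qed measurable

lemma AE_xhat_tendsto_hard_est:
  fixes x :: "nat \<Rightarrow> real ^ 'd"
  assumes "l < L" and distinct: "\<And>r s. r < L \<Longrightarrow> s < L \<Longrightarrow> r \<noteq> s \<Longrightarrow> x r \<noteq> x s"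
  shows "AE \<omega> in M. hard_set L x (\<lambda>i. n i \<omega>) m l \<noteq> {} \<longrightarrow>
           ((\<lambda>\<beta>. xhat L x (\<lambda>i. n i \<omega>) m \<beta> l) \<longlongrightarrow> hard_est L x (\<lambda>i. n i \<omega>) m l) at_top"
proof -
  have "AE \<omega> in M. \<forall>i r. r < L \<and> r \<noteq> l \<longrightarrow> n i \<omega> \<bullet> (x r - x l) \<noteq> 0"
    unfolding AE_all_countable
  proof (intro allI)
    fix i r
    show "AE \<omega> in M. r < L \<and> r \<noteq> l \<longrightarrow> n i \<omega> \<bullet> (x r - x l) \<noteq> 0"
    proof (cases "r < L \<and> r \<noteq> l")
      case True
      then have "x r - x l \<noteq> 0"
        using distinct[of r l] assms(1) by simp
      then show ?thesis
        using True AE_inner_sample_neq_0[of "x r - x l" i] by simp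
    qed simp
  qed
  then show ?thesis
  proof eventually_elim
    case (elim \<omega>)
    then show ?case
      by (auto simp: inner_diff_right intro!: xhat_tendsto_hard_est[OF assms(1)])
  qed
qed

lemma tendsto_expectation_ratio_div_at_0:
  fixes x :: "nat \<Rightarrow> real ^ 'd"
  assumes "l < L"
  shows "((\<lambda>\<beta>. (1 / \<beta>) *\<^sub>R (inverse (expectation (\<lambda>\<omega>. softp L x (n 0 \<omega>) \<beta> l))
            *\<^sub>R (\<chi> k. expectation (\<lambda>\<omega>. softp L x (n 0 \<omega>) \<beta> l * n 0 \<omega> $ k))))
          \<longlongrightarrow> x l - (1 / real L) *\<^sub>R (\<Sum>r<L. x r)) (at 0)"
proof -
  have "((\<lambda>\<beta>. inverse (expectation (\<lambda>\<omega>. softp L x (n 0 \<omega>) \<beta> l))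
      *\<^sub>R (\<chi> k. expectation (\<lambda>\<omega>. softp L x (n 0 \<omega>) \<beta> l * n 0 \<omega> $ k) / \<beta>))
      \<longlongrightarrow> inverse (1 / real L) *\<^sub>R (\<chi> k. (x l $ k - (\<Sum>r<L. x r $ k) / real L) / real L)) (at 0)"
    using assms
    by (intro tendsto_scaleR tendsto_inverse tendsto_vec_lambda tendsto_expectation_softp_at_0
        tendsto_expectation_softp_mult_coord_div_at_0) simp_all
  moreover have "inverse (1 / real L) *\<^sub>R (\<chi> k. (x l $ k - (\<Sum>r<L. x r $ k) / real L) / real L)
      = x l - (1 / real L) *\<^sub>R (\<Sum>r<L. x r)"
    using assms by (simp add: vec_eq_iff field_simps)
  moreover have "(\<lambda>\<beta>. (1 / \<beta>) *\<^sub>R (inverse (expectation (\<lambda>\<omega>. softp L x (n 0 \<omega>) \<beta> l))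
      *\<^sub>R (\<chi> k. expectation (\<lambda>\<omega>. softp L x (n 0 \<omega>) \<beta> l * n 0 \<omega> $ k))))
    = (\<lambda>\<beta>. inverse (expectation (\<lambda>\<omega>. softp L x (n 0 \<omega>) \<beta> l))
      *\<^sub>R (\<chi> k. expectation (\<lambda>\<omega>. softp L x (n 0 \<omega>) \<beta> l * n 0 \<omega> $ k) / \<beta>))"
    by (simp add: fun_eq_iff vec_eq_iff divide_inverse mult_ac)
  ultimately show ?thesis
    by simp
qed

lemma AE_xhat_large_sample_limit:
  fixes x :: "nat \<Rightarrow> real ^ 'd"
  assumes "l < L"
  shows "AE \<omega> in M. \<exists>g :: real \<Rightarrow> real ^ 'd.
           (\<forall>\<beta>. \<beta> \<noteq> 0 \<longrightarrow> (\<lambda>m. xhat L x (\<lambda>i. n i \<omega>) m \<beta> l) \<longlonglongrightarrow> g \<beta>)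
           \<and> ((\<lambda>\<beta>. (1 / \<beta>) *\<^sub>R g \<beta>) \<longlongrightarrow> x l - (1 / real L) *\<^sub>R (\<Sum>r<L. x r)) (at 0)"
  using AE_average_softp_tendsto[OF assms, where x=x]
proof eventually_elim
  case (elim \<omega>)
  define g where "g \<beta> = inverse (expectation (\<lambda>\<omega>. softp L x (n 0 \<omega>) \<beta> l))
    *\<^sub>R (\<chi> k. expectation (\<lambda>\<omega>. softp L x (n 0 \<omega>) \<beta> l * n 0 \<omega> $ k))" for \<beta>
  have "(\<lambda>m. xhat L x (\<lambda>i. n i \<omega>) m \<beta> l) \<longlonglongrightarrow> g \<beta>" for \<beta>
  proof -
    have "(\<lambda>m. inverse ((\<Sum>i<m. softp L x (n i \<omega>) \<beta> l) / real m)
        *\<^sub>R (\<chi> k. (\<Sum>i<m. softp L x (n i \<omega>) \<beta> l * n i \<omega> $ k) / real m)) \<longlonglongrightarrow> g \<beta>"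
      unfolding g_def using elim expectation_softp_pos[OF assms, of x 0 \<beta>]
      by (intro tendsto_scaleR tendsto_inverse tendsto_vec_lambda) auto
    then show ?thesis
      by (rule Lim_transform_eventually)
         (auto intro: eventually_mono[OF eventually_gt_at_top[of 0]] simp: xhat_eq_ratio_of_averages)
  qed
  moreover have "((\<lambda>\<beta>. (1 / \<beta>) *\<^sub>R g \<beta>) \<longlongrightarrow> x l - (1 / real L) *\<^sub>R (\<Sum>r<L. x r)) (at 0)"
    unfolding g_def by (rule tendsto_expectation_ratio_div_at_0[OF assms])
  ultimately show ?case
    by blast
qed

end

theorem proposition1:
  fixes P :: "'w measure"
    and L :: nat
    and x :: "nat \<Rightarrow> real ^ 'd"
    and n :: "nat \<Rightarrow> 'w \<Rightarrow> real ^ 'd"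
    and l :: nat
  assumes "prob_space P"
    and "L \<ge> 2"
    and "\<And>r s. r < L \<Longrightarrow> s < L \<Longrightarrow> r \<noteq> s \<Longrightarrow> x r \<noteq> x s"
    and "\<And>r s. r < L \<Longrightarrow> s < L \<Longrightarrow> norm (x r) = norm (x s)"
    and "prob_space.indep_vars P (\<lambda>_. borel) (\<lambda>(i, k) \<omega>. n i \<omega> $ k) UNIV"
    and "\<And>i k. distributed P lborel (\<lambda>\<omega>. n i \<omega> $ k) (\<lambda>t. ennreal (std_normal_density t))"
    and "l < L"
  shows "(\<forall>m. AE \<omega> in P. hard_set L x (\<lambda>i. n i \<omega>) m l \<noteq> {} \<longrightarrow>
            ((\<lambda>\<beta>. xhat L x (\<lambda>i. n i \<omega>) m \<beta> l) \<longlongrightarrow> hard_est L x (\<lambda>i. n i \<omega>) m l) at_top)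
       \<and> (AE \<omega> in P. \<exists>g :: real \<Rightarrow> real ^ 'd.
            (\<forall>\<beta>. \<beta> \<noteq> 0 \<longrightarrow> (\<lambda>m. xhat L x (\<lambda>i. n i \<omega>) m \<beta> l) \<longlonglongrightarrow> g \<beta>)
            \<and> ((\<lambda>\<beta>. (1 / \<beta>) *\<^sub>R g \<beta>) \<longlongrightarrow> x l - (1 / real L) *\<^sub>R (\<Sum>r<L. x r)) (at 0))"
proof -
  interpret std_normal_samples P n
    using assms(1,5,6) by (intro std_normal_samples.intro std_normal_samples_axioms.intro)
  show ?thesis
    using AE_xhat_tendsto_hard_est[where x=x, OF assms(7,3)]
      AE_xhat_large_sample_limit[where x=x, OF assms(7)]
    by blast
qed

end
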